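(* Let $r\ge 2$, $\alpha=2^r-1$, $\beta=2^{r-1}(2^r-1)$, let $\mathcal{C}\subseteq\mathbb{Z}_2^\alpha\times\mathbb{Z}_4^\beta$ be a $\mathbb{Z}_2\mathbb{Z}_4$-additive 1-perfect code and $D=\mathcal{C}^\perp$. If $D$ is $\mathbb{Z}_2\mathbb{Z}_4$-cyclic, then $D_X$ is a binary simplex code of length $2^r-1$ (and it is cyclic). Moreover, a codeword $\mathbf{z}\in D$ has zero $\mathbb{Z}_2$ part, $\mathbf{z}=(0,\dots,0\mid z'_1,\dots,z'_\beta)$, if and only if $\mathbf{z}\in D_b$.
   Context: A $\mathbb{Z}_2\mathbb{Z}_4$-additive code is an additive subgroup of $\mathbb{Z}_2^\alpha\times\mathbb{Z}_4^\beta$; vectors are $(u\mid u')$ with $u\in\mathbb{Z}_2^\alpha$ (the $X$ coordinates) and $u'\in\mathbb{Z}_4^\beta$; $D_X$ is the binary code of projections of codewords of $D$ onto the $X$ coordinates, and $D_b$ is the subgroup of codewords of $D$ of order at most 2. The Gray map $\phi:\mathbb{Z}_4\to\mathbb{Z}_2^2$ is $0\mapsto(0,0),1\mapsto(0,1),2\mapsto(1,1),3\mapsto(1,0)$, $\Phi(u\mid u')=(u\mid\phi(u'_1),\dots,\phi(u'_\beta))$. A binary code $C\subseteq\mathbb{Z}_2^n$ is 1-perfect if the Hamming balls of radius 1 around its codewords partition $\mathbb{Z}_2^n$; a $\mathbb{Z}_2\mathbb{Z}_4$-additive code is 1-perfect if its Gray image is. The dual is $\mathcal{C}^\perp=\{\mathbf{v}:\mathbf{u}\cdot\mathbf{v}=0\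 \forall\mathbf{u}\in\mathcal{C}\}$ with $\mathbf{u}\cdot\mathbf{v}=2\sum_{i=1}^\alpha u_iv_i+\sum_{j=1}^\beta u'_jv'_j\in\mathbb{Z}_4$. With $\sigma(v_1,\dots,v_m)=(v_m,v_1,\dots,v_{m-1})$ and $\sigma(u\mid u')=(\sigma(u)\mid\sigma(u'))$, a code is $\mathbb{Z}_2\mathbb{Z}_4$-cyclic if closed under $\sigma$. A binary simplex code of length $2^r-1$ is a binary linear code of dimension $r$ whose generator matrix has as columns all nonzero vectors of $\mathbb{Z}_2^r$ (in some order), i.e. the dual of a binary Hamming code. *)

theory Defs
  imports Main
begin

definition binvecs :: "nat \<Rightarrow> (nat \<Rightarrow> nat) set" where
  "binvecs n = {u. (\<forall>i<n. u i < 2) \<and> (\<forall>i\<ge>n. u i = 0)}"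

definition quatvecs :: "nat \<Rightarrow> (nat \<Rightarrow> nat) set" where
  "quatvecs n = {u. (\<forall>i<n. u i < 4) \<and> (\<forall>i\<ge>n. u i = 0)}"

type_synonym z24vec = "(nat \<Rightarrow> nat) \<times> (nat \<Rightarrow> nat)"

definition Z24 :: "nat \<Rightarrow> nat \<Rightarrow> z24vec set" where
  "Z24 \<alpha> \<beta> = binvecs \<alpha> \<times> quatvecs \<beta>"

definition z24_zero :: z24vec where
  "z24_zero = (\<lambda>_. 0, \<lambda>_. 0)"

definition z24_add :: "z24vec \<Rightarrow> z24vec \<Rightarrow> z24vec" where
  "z24_add x y = (\<lambda>i. (fst x i + fst y i) mod 2, \<lambda>j. (snd x j + snd y j) mod 4)"

text \<open>Additive code = additive subgroup of Z_2^alpha x Z_4^beta (finite group, so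
  containing 0 and closed under addition suffices).\<close>
definition z24_additive :: "nat \<Rightarrow> nat \<Rightarrow> z24vec set \<Rightarrow> bool" where
  "z24_additive \<alpha> \<beta> C \<longleftrightarrow> C \<subseteq> Z24 \<alpha> \<beta> \<and> z24_zero \<in> C \<and>
     (\<forall>x\<in>C. \<forall>y\<in>C. z24_add x y \<in> C)"

definition gray :: "nat \<Rightarrow> nat \<times> nat" where
  "gray a = (if a = 0 then (0,0) else if a = 1 then (0,1) else if a = 2 then (1,1) else (1,0))"

definition Gray :: "nat \<Rightarrow> nat \<Rightarrow> z24vec \<Rightarrow> (nat \<Rightarrow> nat)" where
  "Gray \<alpha> \<beta> x = (\<lambda>i. if i < \<alpha> then fst x i
      else if i < \<alpha> + 2 * \<beta> then
        (if even (i - \<alpha>) then fst (gray (snd x ((i - \<alpha>) div 2)))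
         else snd (gray (snd x ((i - \<alpha>) div 2))))
      else 0)"

definition hdist :: "nat \<Rightarrow> (nat \<Rightarrow> nat) \<Rightarrow> (nat \<Rightarrow> nat) \<Rightarrow> nat" where
  "hdist n x y = card {i. i < n \<and> x i \<noteq> y i}"

definition perfect1 :: "nat \<Rightarrow> (nat \<Rightarrow> nat) set \<Rightarrow> bool" where
  "perfect1 n B \<longleftrightarrow> B \<subseteq> binvecs n \<and> (\<forall>x\<in>binvecs n. \<exists>!c. c \<in> B \<and> hdist n x c \<le> 1)"

definition z24_perfect1 :: "nat \<Rightarrow> nat \<Rightarrow> z24vec set \<Rightarrow> bool" where
  "z24_perfect1 \<alpha> \<beta> C \<longleftrightarrow> perfect1 (\<alpha> + 2 * \<beta>) (Gray \<alpha> \<beta> ` C)"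

definition z24_inner :: "nat \<Rightarrow> nat \<Rightarrow> z24vec \<Rightarrow> z24vec \<Rightarrow> nat" where
  "z24_inner \<alpha> \<beta> u v =
     (2 * (\<Sum>i<\<alpha>. fst u i * fst v i) + (\<Sum>j<\<beta>. snd u j * snd v j)) mod 4"

definition z24_dual :: "nat \<Rightarrow> nat \<Rightarrow> z24vec set \<Rightarrow> z24vec set" where
  "z24_dual \<alpha> \<beta> C = {v \<in> Z24 \<alpha> \<beta>. \<forall>u\<in>C. z24_inner \<alpha> \<beta> u v = 0}"

text \<open>Cyclic shift (v_1,...,v_m) -> (v_m,v_1,...,v_{m-1}), 0-indexed.\<close>
definition rot :: "nat \<Rightarrow> (nat \<Rightarrow> nat) \<Rightarrow> (nat \<Rightarrow> nat)" where
  "rot m v = (\<lambda>i. if i < m then (if i = 0 then v (m - 1) else v (i - 1)) else 0)"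

definition z24_cyclic :: "nat \<Rightarrow> nat \<Rightarrow> z24vec set \<Rightarrow> bool" where
  "z24_cyclic \<alpha> \<beta> D \<longleftrightarrow> (\<forall>z\<in>D. (rot \<alpha> (fst z), rot \<beta> (snd z)) \<in> D)"

definition bin_cyclic :: "nat \<Rightarrow> (nat \<Rightarrow> nat) set \<Rightarrow> bool" where
  "bin_cyclic n B \<longleftrightarrow> (\<forall>x\<in>B. rot n x \<in> B)"

text \<open>D_X: projection onto the X (binary) coordinates; D_b: codewords of order at most 2.\<close>
definition proj_X :: "z24vec set \<Rightarrow> (nat \<Rightarrow> nat) set" where
  "proj_X D = fst ` D"

definition order2_part :: "z24vec set \<Rightarrow> z24vec set" where
  "order2_part D = {z \<in> D. z24_add z z = z24_zero}"

text \<open>Binary simplex code of length 2^r - 1: the row space over Z_2 of an r x n binary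
  matrix g whose columns are exactly all nonzero vectors of Z_2^r (each once).\<close>
definition simplex_code :: "nat \<Rightarrow> nat \<Rightarrow> (nat \<Rightarrow> nat) set \<Rightarrow> bool" where
  "simplex_code r n B \<longleftrightarrow> n = 2 ^ r - 1 \<and>
     (\<exists>g :: nat \<Rightarrow> nat \<Rightarrow> nat.
        (\<forall>k<r. g k \<in> binvecs n) \<and>
        bij_betw (\<lambda>j. \<lambda>k. if k < r then g k j else 0) {..<n} (binvecs r - {\<lambda>_. 0}) \<and>
        B = {(\<lambda>j. if j < n then (\<Sum>k<r. a k * g k j) mod 2 else 0) | a. a \<in> binvecs r})"

end

theory Submission
  imports Defs "HOL-Library.Numeral_Type" "HOL-Library.Function_Algebras"
    "HOL-Library.Product_Plus" Complex_Main
begin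

text \<open>
  Work in \<open>W = \<int>\<^sub>2\<^sup>\<alpha> \<times> \<int>\<^sub>4\<^sup>\<beta>\<close> with the \<open>\<int>\<^sub>4\<close>-valued form \<open>\<langle>u,v\<rangle>\<close>. Two words have Gray images at
  Hamming distance at most 1 iff their difference lies in \<open>E = {0, e\<^sub>i, \<plusminus>f\<^sub>j}\<close>, so
  1-perfectness of \<open>C\<close> says that \<open>C + E\<close> tiles \<open>W\<close>. As \<open>|E| = 1 + \<alpha> + 2\<beta> = 4\<^sup>r\<close>, character sums
  give \<open>|D| = 4\<^sup>r\<close> and \<open>D\<^sup>\<bottom> = C\<close>.

  For every \<open>w\<close>, the representative in \<open>E\<close> of \<open>2w\<close> modulo \<open>C\<close> lies in \<open>E\<^sub>X = {0, e\<^sub>i}\<close>, and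
  counting fibres shows that each \<open>e\<^sub>i\<close> occurs: \<open>2w - e\<^sub>i \<in> C\<close> for some \<open>w\<close>. Pairing with
  \<open>d \<in> D\<close> gives \<open>d\<^sub>X = 0 \<longleftrightarrow> 2d = 0\<close>, i.e. \<open>D\<^sub>b\<close> is the kernel of the projection to \<open>D\<^sub>X\<close>.
  Therefore \<open>|D| = |D\<^sub>X| |D\<^sub>b| = |2D| |D\<^sub>b| \<le> |D\<^sub>b|\<^sup>2\<close> and \<open>|D\<^sub>X| \<le> 2\<^sup>r\<close>. Finally \<open>e\<^sub>i\<close> and
  \<open>e\<^sub>i + e\<^sub>j\<close> are not in \<open>C = D\<^sup>\<bottom>\<close>, so the columns of a generator matrix of \<open>D\<^sub>X\<close> are nonzero
  and pairwise distinct; there are \<open>2\<^sup>r - 1\<close> of them, which forces \<open>dim D\<^sub>X = r\<close> and makes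
  the columns exactly the nonzero vectors of \<open>\<int>\<^sub>2\<^sup>r\<close>. Cyclicity of \<open>D\<close> is needed only for the
  cyclicity of \<open>D\<^sub>X\<close>.
\<close>

section \<open>Vectors over \<open>\<int>\<^sub>2\<close> and \<open>\<int>\<^sub>4\<close>\<close>

definition bounded_vecs :: "nat \<Rightarrow> nat \<Rightarrow> (nat \<Rightarrow> nat) set" where
  "bounded_vecs k n = {u. (\<forall>i<n. u i < k) \<and> (\<forall>i\<ge>n. u i = 0)}"

lemma bounded_vecs_Suc:
  "bounded_vecs k (Suc n) = (\<lambda>(u,x). u(n:=x)) ` (bounded_vecs k n \<times> {..<k})"
proof (intro set_eqI iffI)
  fix f assume f: "f \<in> bounded_vecs k (Suc n)"
  have "f = (\<lambda>(u,x). u(n:=x)) (f(n:=0), f n)" by auto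
  moreover have "(f(n:=0), f n) \<in> bounded_vecs k n \<times> {..<k}"
    using f by (auto simp: bounded_vecs_def)
  ultimately show "f \<in> (\<lambda>(u,x). u(n:=x)) ` (bounded_vecs k n \<times> {..<k})" by blast
qed (auto simp: bounded_vecs_def less_Suc_eq)

lemma finite_card_bounded_vecs: "finite (bounded_vecs k n) \<and> card (bounded_vecs k n) = k ^ n"
proof (induction n)
  case 0
  have "bounded_vecs k 0 = {\<lambda>_. 0}" unfolding bounded_vecs_def by auto
  then show ?case by simp
next
  case (Suc n)
  have "inj_on (\<lambda>(u,x). u(n:=x)) (bounded_vecs k n \<times> {..<k})"
  proof (rule inj_onI, clarsimp)
    fix u x u' x' assume "u \<in> bounded_vecs k n" "u' \<in> bounded_vecs k n" "u(n := x) = u'(n := x')"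
    moreover from this have "u n = 0" "u' n = 0" by (auto simp: bounded_vecs_def)
    ultimately show "u = u' \<and> x = x'" by (metis fun_upd_idem fun_upd_same fun_upd_upd)
  qed
  then show ?case using Suc by (simp add: bounded_vecs_Suc card_image card_cartesian_product)
qed

lemma binvecs_eq: "binvecs n = bounded_vecs 2 n"
  and quatvecs_eq: "quatvecs n = bounded_vecs 4 n"
  by (auto simp: binvecs_def quatvecs_def bounded_vecs_def)

lemma finite_card_binvecs: "finite (binvecs n) \<and> card (binvecs n) = 2 ^ n"
  using finite_card_bounded_vecs[of 2 n] by (simp add: binvecs_eq)

lemma card_binvecs_nonzero: "card (binvecs m - {\<lambda>_. 0}) = 2 ^ m - 1"
proof -
  have "(\<lambda>_. 0) \<in> binvecs m" by (simp add: binvecs_def)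
  then show ?thesis using finite_card_binvecs[of m] by simp
qed

lemma z2_cases: "(x::2) = 0 \<or> x = 1"
proof (induct x)
  case (of_int z) then have "z = 0 \<or> z = 1" by auto
  then show ?case by auto
qed

lemma z4_cases: "(x::4) = 0 \<or> x = 1 \<or> x = 2 \<or> x = 3"
proof (induct x)
  case (of_int z) then have "z = 0 \<or> z = 1 \<or> z = 2 \<or> z = 3" by auto
  then show ?case by auto
qed

lemma of_nat_mod_CHAR: "of_nat (n mod CHAR('a)) = (of_nat n :: 'a::semiring_1)"
proof -
  have "of_nat n = (of_nat (n mod CHAR('a) + CHAR('a) * (n div CHAR('a))) :: 'a)" by simp
  also have "\<dots> = of_nat (n mod CHAR('a))" by (simp only: of_nat_add of_nat_mult of_nat_CHAR) simp
  finally show ?thesis by simp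
qed

lemma of_nat_mod_2: "(of_nat (n mod 2) :: 2) = of_nat n"
  using of_nat_mod_CHAR[where 'a=2] by simp

lemma of_nat_mod_4: "(of_nat (n mod 4) :: 4) = of_nat n"
  using of_nat_mod_CHAR[where 'a=4] by simp

lemma of_nat_eq_iff_2: "p < 2 \<Longrightarrow> q < 2 \<Longrightarrow> (of_nat p :: 2) = of_nat q \<longleftrightarrow> p = q"
  by (auto simp: less_2_cases_iff)

lemma of_nat_eq_iff_4: "p < 4 \<Longrightarrow> q < 4 \<Longrightarrow> (of_nat p :: 4) = of_nat q \<longleftrightarrow> p = q"
proof -
  have "(of_nat p :: 4) \<noteq> of_nat q" if "p < q" "q < 4" for p q
  proof
    assume "(of_nat p :: 4) = of_nat q"
    then have "4 dvd (q - p)" using that of_nat_eq_iff_char_dvd[where 'a=4] by simp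
    then show False using that by (auto dest: dvd_imp_le)
  qed
  then show "p < 4 \<Longrightarrow> q < 4 \<Longrightarrow> ?thesis" by (metis linorder_neqE_nat)
qed

lemma z2_add_self [simp]: "(x::2) + x = 0"
  using z2_cases[of x] by auto

lemma z2_uminus [simp]: "- (x::2) = x"
  using z2_cases[of x] by auto

definition z2_to_nat :: "2 \<Rightarrow> nat" where
  "z2_to_nat x = (if x = 0 then 0 else 1)"

definition z4_to_nat :: "4 \<Rightarrow> nat" where
  "z4_to_nat x = (if x = 0 then 0 else if x = 1 then 1 else if x = 2 then 2 else 3)"

lemma of_nat_z2_to_nat [simp]: "of_nat (z2_to_nat x) = x"
  using z2_cases[of x] by (auto simp: z2_to_nat_def)

lemma of_nat_z4_to_nat [simp]: "of_nat (z4_to_nat x) = x"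
  using z4_cases[of x] by (auto simp: z4_to_nat_def)

lemma z2_to_nat_less: "z2_to_nat x < 2"
  by (simp add: z2_to_nat_def)

lemma z4_to_nat_less: "z4_to_nat y < 4"
  by (simp add: z4_to_nat_def)

lemma z2_to_nat_of_nat: "z2_to_nat (of_nat p) = p mod 2"
  by (metis of_nat_eq_iff_2 of_nat_mod_2 of_nat_z2_to_nat mod_less_divisor z2_to_nat_less
      zero_less_numeral)

lemma z4_to_nat_of_nat: "p < 4 \<Longrightarrow> z4_to_nat (of_nat p) = p"
  using of_nat_eq_iff_4[of p "z4_to_nat (of_nat p)"] z4_to_nat_less by auto

lemma z2_to_nat_inject: "z2_to_nat x = z2_to_nat y \<longleftrightarrow> x = y"
  by (metis of_nat_z2_to_nat)

lemma z2_to_nat_eq_0_iff [simp]: "z2_to_nat x = 0 \<longleftrightarrow> x = 0"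
  by (simp add: z2_to_nat_def)

lemma z4_to_nat_0 [simp]: "z4_to_nat 0 = 0"
  by (simp add: z4_to_nat_def)


section \<open>The group \<open>\<int>\<^sub>2\<^sup>\<alpha> \<times> \<int>\<^sub>4\<^sup>\<beta>\<close>, its bilinear form and duality\<close>

text \<open>Words take values in the residue types \<open>2\<close> and \<open>4\<close>, so that \<open>+\<close> is the group operation;
  \<open>zword_of\<close> and \<open>z24vec_of\<close> translate from the \<open>nat\<close>-valued encoding of the statement.\<close>

type_synonym zword = "(nat \<Rightarrow> 2) \<times> (nat \<Rightarrow> 4)"

definition zwords :: "nat \<Rightarrow> nat \<Rightarrow> zword set" where
  "zwords a b = {w. (\<forall>i\<ge>a. fst w i = 0) \<and> (\<forall>j\<ge>b. snd w j = 0)}"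

definition zword_of :: "z24vec \<Rightarrow> zword" where
  "zword_of z = (\<lambda>i. of_nat (fst z i), \<lambda>j. of_nat (snd z j))"

definition z24vec_of :: "zword \<Rightarrow> z24vec" where
  "z24vec_of w = (\<lambda>i. z2_to_nat (fst w i), \<lambda>j. z4_to_nat (snd w j))"

lemma zwords_0 [simp]: "0 \<in> zwords a b"
  and zwords_add [simp]: "x \<in> zwords a b \<Longrightarrow> y \<in> zwords a b \<Longrightarrow> x + y \<in> zwords a b"
  and zwords_uminus [simp]: "x \<in> zwords a b \<Longrightarrow> - x \<in> zwords a b"
  and zwords_diff [simp]: "x \<in> zwords a b \<Longrightarrow> y \<in> zwords a b \<Longrightarrow> x - y \<in> zwords a b"
  by (simp_all add: zwords_def)

lemma Z24_fst_less: "z \<in> Z24 a b \<Longrightarrow> fst z i < 2"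
  unfolding Z24_def binvecs_def by (cases "i < a") auto

lemma Z24_snd_less: "z \<in> Z24 a b \<Longrightarrow> snd z j < 4"
  unfolding Z24_def quatvecs_def by (cases "j < b") auto

lemma Z24_fst_outside: "z \<in> Z24 a b \<Longrightarrow> a \<le> i \<Longrightarrow> fst z i = 0"
  by (auto simp: Z24_def binvecs_def)

lemma Z24_add: "x \<in> Z24 a b \<Longrightarrow> y \<in> Z24 a b \<Longrightarrow> z24_add x y \<in> Z24 a b"
  and Z24_zero: "z24_zero \<in> Z24 a b"
  by (auto simp: Z24_def binvecs_def quatvecs_def z24_add_def z24_zero_def)

lemma zword_of_z24vec_of [simp]: "zword_of (z24vec_of w) = w"
  by (simp add: zword_of_def z24vec_of_def)

lemma z24vec_of_zword_of: "z \<in> Z24 a b \<Longrightarrow> z24vec_of (zword_of z) = z"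
  by (auto simp: zword_of_def z24vec_of_def prod_eq_iff z2_to_nat_of_nat z4_to_nat_of_nat
      Z24_fst_less Z24_snd_less)

lemma z24vec_of_in_Z24: "w \<in> zwords a b \<Longrightarrow> z24vec_of w \<in> Z24 a b"
  by (auto simp: Z24_def binvecs_def quatvecs_def zwords_def z24vec_of_def
      z2_to_nat_less z4_to_nat_less)

lemma zword_of_in_zwords: "z \<in> Z24 a b \<Longrightarrow> zword_of z \<in> zwords a b"
  by (auto simp: Z24_def binvecs_def quatvecs_def zwords_def zword_of_def)

lemma inj_on_zword_of: "inj_on zword_of (Z24 a b)"
  by (metis inj_onI z24vec_of_zword_of)

lemma zword_of_Z24: "zword_of ` Z24 a b = zwords a b"
proof
  show "zwords a b \<subseteq> zword_of ` Z24 a b"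
    using z24vec_of_in_Z24 zword_of_z24vec_of by (metis image_eqI subsetI)
qed (use zword_of_in_zwords in blast)

lemma zword_of_add: "zword_of (z24_add x y) = zword_of x + zword_of y"
  by (simp add: zword_of_def z24_add_def fun_eq_iff of_nat_mod_2 of_nat_mod_4)

lemma zword_of_zero: "zword_of z24_zero = 0"
  by (simp add: zword_of_def z24_zero_def fun_eq_iff zero_prod_def)

lemma finite_zwords [simp]: "finite (zwords a b)"
proof -
  have "finite (Z24 a b)"
    unfolding Z24_def binvecs_eq quatvecs_eq using finite_card_bounded_vecs by simp
  then show ?thesis by (metis zword_of_Z24 finite_imageI)
qed

lemma zword_four_times: "(x::zword) + x + x + x = 0"
proof -
  have "(4::2) = 0" "(4::4) = 0" by simp_all
  then have "4 * (y::2) = 0" "4 * (z::4) = 0" for y z by (metis mult_zero_left)+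
  then show ?thesis by (cases x) (simp add: fun_eq_iff zero_prod_def)
qed

lemma zword_uminus: "- (x::zword) = x + x + x"
  by (rule minus_unique) (use zword_four_times[of x] in \<open>simp add: add.assoc\<close>)

definition zsubgroup :: "zword set \<Rightarrow> bool" where
  "zsubgroup H \<longleftrightarrow> 0 \<in> H \<and> (\<forall>x\<in>H. \<forall>y\<in>H. x + y \<in> H)"

lemma zsubgroup_0: "zsubgroup H \<Longrightarrow> 0 \<in> H"
  and zsubgroup_add: "zsubgroup H \<Longrightarrow> x \<in> H \<Longrightarrow> y \<in> H \<Longrightarrow> x + y \<in> H"
  by (simp_all add: zsubgroup_def)

lemma zsubgroup_uminus: "zsubgroup H \<Longrightarrow> x \<in> H \<Longrightarrow> - x \<in> H"
  unfolding zword_uminus by (simp add: zsubgroup_def)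

lemma zsubgroup_diff: "zsubgroup H \<Longrightarrow> x \<in> H \<Longrightarrow> y \<in> H \<Longrightarrow> x - y \<in> H"
  using zsubgroup_add[of H x "- y"] zsubgroup_uminus[of H y] by simp

lemma zsubgroup_zwords: "zsubgroup (zwords a b)"
  by (simp add: zsubgroup_def)

lemma zsubgroup_zword_of:
  assumes "z24_additive a b C"
  shows "zsubgroup (zword_of ` C)"
  unfolding zsubgroup_def
proof (intro conjI ballI)
  show "0 \<in> zword_of ` C"
    using assms zword_of_zero by (metis image_eqI z24_additive_def)
  fix x y assume "x \<in> zword_of ` C" "y \<in> zword_of ` C"
  then obtain x' y' where "x' \<in> C" "y' \<in> C" "x = zword_of x'" "y = zword_of y'" by blast
  then show "x + y \<in> zword_of ` C"
    using assms by (metis zword_of_add image_eqI z24_additive_def)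
qed

definition z2_to_z4 :: "2 \<Rightarrow> 4" where
  "z2_to_z4 x = (if x = 0 then 0 else 2)"

lemma z2_to_z4_add: "z2_to_z4 (x + y) = z2_to_z4 x + z2_to_z4 y"
  using z2_cases[of x] z2_cases[of y] by (auto simp: z2_to_z4_def)

lemma z2_to_z4_0 [simp]: "z2_to_z4 0 = 0"
  by (simp add: z2_to_z4_def)

lemma z2_to_z4_eq_0_iff [simp]: "z2_to_z4 x = 0 \<longleftrightarrow> x = 0"
  by (simp add: z2_to_z4_def)

lemma z2_to_z4_of_nat: "z2_to_z4 (of_nat n) = 2 * (of_nat n :: 4)"
proof -
  have "(of_nat n :: 2) = 0 \<longleftrightarrow> even n"
    using of_nat_eq_0_iff_char_dvd[where 'a=2] by simp
  moreover have "2 * (of_nat n :: 4) = of_nat (2 * n mod 4)"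
    by (simp add: of_nat_mod_4)
  moreover have "2 * n mod 4 = (if even n then 0 else 2)"
    by presburger
  ultimately show ?thesis by (simp add: z2_to_z4_def)
qed

text \<open>Binary products enter the \<open>\<int>\<^sub>4\<close>-valued form through \<open>\<int>\<^sub>2 \<cong> 2\<int>\<^sub>4\<close>.\<close>

definition zinner :: "nat \<Rightarrow> nat \<Rightarrow> zword \<Rightarrow> zword \<Rightarrow> 4" where
  "zinner a b u v = (\<Sum>i<a. z2_to_z4 (fst u i * fst v i)) + (\<Sum>j<b. snd u j * snd v j)"

lemma zinner_commute: "zinner a b u v = zinner a b v u"
  by (simp add: zinner_def mult.commute)

lemma zinner_add_left: "zinner a b (u + u') v = zinner a b u v + zinner a b u' v"
  by (simp add: zinner_def distrib_right z2_to_z4_add sum.distrib algebra_simps)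

lemma zinner_add_right: "zinner a b v (u + u') = zinner a b v u + zinner a b v u'"
  by (metis zinner_add_left zinner_commute)

lemma zinner_0_left [simp]: "zinner a b 0 v = 0"
  and zinner_0_right [simp]: "zinner a b v 0 = 0"
  by (simp_all add: zinner_def)

lemma zinner_diff_left: "zinner a b (u - u') v = zinner a b u v - zinner a b u' v"
  using zinner_add_left[of a b "u - u'" u' v] by (simp add: algebra_simps)

lemma zinner_zword_of: "zinner a b (zword_of u) (zword_of v) = of_nat (z24_inner a b u v)"
proof -
  have "z2_to_z4 (of_nat p * of_nat q) = 2 * (of_nat p * of_nat q :: 4)" for p q
    using z2_to_z4_of_nat[of "p * q"] by simp
  then show ?thesis
    by (simp add: zinner_def zword_of_def z24_inner_def of_nat_mod_4 sum_distrib_left)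
qed

lemma z24_inner_eq_0_iff: "z24_inner a b u v = 0 \<longleftrightarrow> zinner a b (zword_of u) (zword_of v) = 0"
  using of_nat_eq_iff_4[of "z24_inner a b u v" 0] by (simp add: zinner_zword_of z24_inner_def)

definition zdual :: "nat \<Rightarrow> nat \<Rightarrow> zword set \<Rightarrow> zword set" where
  "zdual a b H = {v \<in> zwords a b. \<forall>u\<in>H. zinner a b u v = 0}"

lemma zsubgroup_zdual: "zsubgroup (zdual a b H)"
  by (auto simp: zsubgroup_def zdual_def zinner_add_right)

lemma zword_of_z24_dual: "zword_of ` z24_dual a b C = zdual a b (zword_of ` C)"
proof (intro set_eqI iffI)
  fix w assume "w \<in> zword_of ` z24_dual a b C"
  then show "w \<in> zdual a b (zword_of ` C)"
    by (auto simp: z24_dual_def zdual_def zword_of_in_zwords z24_inner_eq_0_iff)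
next
  fix w assume w: "w \<in> zdual a b (zword_of ` C)"
  then have "z24vec_of w \<in> z24_dual a b C"
    by (auto simp: z24_dual_def zdual_def z24vec_of_in_Z24 z24_inner_eq_0_iff)
  then show "w \<in> zword_of ` z24_dual a b C"
    by (metis zword_of_z24vec_of image_eqI)
qed

definition unit_X :: "nat \<Rightarrow> zword" where
  "unit_X i = ((\<lambda>k. if k = i then 1 else 0), 0)"

definition unit_Z :: "nat \<Rightarrow> zword" where
  "unit_Z j = (0, (\<lambda>k. if k = j then 1 else 0))"

lemma unit_X_in_zwords: "i < a \<Longrightarrow> unit_X i \<in> zwords a b"
  and unit_Z_in_zwords: "j < b \<Longrightarrow> unit_Z j \<in> zwords a b"
  by (simp_all add: zwords_def unit_X_def unit_Z_def)

lemma zinner_unit_X: "i < a \<Longrightarrow> zinner a b (unit_X i) v = z2_to_z4 (fst v i)"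
proof -
  assume "i < a"
  moreover have h: "(\<lambda>k. z2_to_z4 (fst (unit_X i) k * fst v k)) = (\<lambda>k. if k = i then z2_to_z4 (fst v i) else 0)"
    by (auto simp: unit_X_def fun_eq_iff)
  ultimately show ?thesis unfolding zinner_def h by (simp add: unit_X_def)
qed

lemma zinner_unit_Z: "j < b \<Longrightarrow> zinner a b (unit_Z j) v = snd v j"
proof -
  assume "j < b"
  moreover have h: "(\<lambda>k. snd (unit_Z j) k * snd v k) = (\<lambda>k. if k = j then snd v j else 0)"
    by (auto simp: unit_Z_def fun_eq_iff)
  ultimately show ?thesis unfolding zinner_def h by (simp add: unit_Z_def)
qed

lemma inj_unit_X: "inj unit_X"
proof (rule injI)
  fix i k assume "unit_X i = unit_X k"
  then have "fst (unit_X i) i = fst (unit_X k) i" by simp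
  then show "i = k" by (simp add: unit_X_def split: if_splits)
qed

lemma inj_unit_Z: "inj unit_Z"
proof (rule injI)
  fix j k assume "unit_Z j = unit_Z k"
  then have "snd (unit_Z j) j = snd (unit_Z k) j" by simp
  then show "j = k" by (simp add: unit_Z_def split: if_splits)
qed

lemma unit_X_neq_0: "unit_X i \<noteq> 0"
  and unit_Z_neq_0: "unit_Z j \<noteq> 0"
  by (auto simp: unit_X_def unit_Z_def prod_eq_iff fun_eq_iff)

lemma unit_X_add_self: "unit_X i + unit_X i = 0"
  by (simp add: unit_X_def prod_eq_iff fun_eq_iff)

lemma unit_Z_add_self_neq_0: "unit_Z j + unit_Z j \<noteq> 0"
  by (auto simp: unit_Z_def prod_eq_iff fun_eq_iff)

lemma zwords_orthogonal_all:
  assumes u: "u \<in> zwords a b" and orth: "\<forall>v\<in>zwords a b. zinner a b v u = 0"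
  shows "u = 0"
proof -
  have "fst u i = 0" for i
  proof (cases "i < a")
    case True
    then show ?thesis using orth unit_X_in_zwords[OF True, of b] zinner_unit_X[OF True, of b u] by force
  qed (use u in \<open>simp add: zwords_def\<close>)
  moreover have "snd u j = 0" for j
  proof (cases "j < b")
    case True
    then show ?thesis using orth unit_Z_in_zwords[OF True, of a] zinner_unit_Z[OF True, of a u] by force
  qed (use u in \<open>simp add: zwords_def\<close>)
  ultimately show "u = 0" by (simp add: prod_eq_iff fun_eq_iff)
qed


lemma card_eq_sum_card_fibres:
  assumes "finite S" "\<forall>x\<in>S. card {y\<in>S. f y = f x} = k"
  shows "card S = card (f ` S) * k"
proof -
  have "card S = card (\<Union>t\<in>f ` S. {y\<in>S. f y = t})"
    by (rule arg_cong[where f=card]) auto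
  also have "\<dots> = (\<Sum>t\<in>f ` S. card {y\<in>S. f y = t})"
    by (rule card_UN_disjoint) (use assms(1) in auto)
  also have "\<dots> = (\<Sum>t\<in>f ` S. k)"
    by (rule sum.cong) (use assms(2) in auto)
  finally show ?thesis by simp
qed

lemma zsubgroup_translate_bij:
  assumes "zsubgroup H" "u \<in> H"
  shows "bij_betw (\<lambda>x. u + x) H H"
proof (rule bij_betw_imageI)
  show "(\<lambda>x. u + x) ` H = H"
  proof
    show "H \<subseteq> (\<lambda>x. u + x) ` H"
    proof
      fix x assume "x \<in> H"
      then have "x - u \<in> H" "x = u + (x - u)" using assms zsubgroup_diff by auto
      then show "x \<in> (\<lambda>x. u + x) ` H" by blast
    qed
  qed (use assms zsubgroup_add in blast)
qed (simp add: inj_on_def)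

lemma card_zsubgroup_eq_card_image_mult:
  assumes H: "zsubgroup H" "finite H" "K \<subseteq> H"
    and fibre: "\<And>x y. x \<in> H \<Longrightarrow> y \<in> H \<Longrightarrow> f y = f x \<longleftrightarrow> y - x \<in> K"
  shows "card H = card (f ` H) * card K"
proof (rule card_eq_sum_card_fibres[OF H(2)], intro ballI)
  fix x assume x: "x \<in> H"
  have "{y\<in>H. f y = f x} = (\<lambda>k. x + k) ` K"
  proof (intro set_eqI iffI)
    fix y assume "y \<in> {y\<in>H. f y = f x}"
    then have "y - x \<in> K" using fibre[OF x] by blast
    moreover have "y = x + (y - x)" by simp
    ultimately show "y \<in> (\<lambda>k. x + k) ` K" by blast
  next
    fix y assume "y \<in> (\<lambda>k. x + k) ` K"
    then obtain k where "k \<in> K" "y = x + k" by blast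
    moreover from this have "y \<in> H" using zsubgroup_add[OF H(1) x] H(3) by blast
    ultimately show "y \<in> {y\<in>H. f y = f x}" using fibre[OF x] by simp
  qed
  then show "card {y\<in>H. f y = f x} = card K"
    by (simp add: card_image inj_on_def)
qed

definition chi :: "4 \<Rightarrow> complex" where
  "chi x = \<i> ^ z4_to_nat x"

lemma chi_add: "chi (x + y) = chi x * chi y"
proof -
  have "\<i> ^ 3 = - \<i>" by (simp add: power3_eq_cube)
  then show ?thesis
    using z4_cases[of x] z4_cases[of y] by (auto simp: chi_def z4_to_nat_def complex_eq_iff)
qed

lemma chi_eq_1_iff: "chi x = 1 \<longleftrightarrow> x = 0"
proof -
  have "\<i> ^ 3 = - \<i>" by (simp add: power3_eq_cube)
  then show ?thesis
    using z4_cases[of x] by (auto simp: chi_def z4_to_nat_def complex_eq_iff)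
qed

lemma sum_chi_zinner:
  assumes "zsubgroup H"
  shows "(\<Sum>u\<in>H. chi (zinner a b u v)) = (if \<forall>u\<in>H. zinner a b u v = 0 then of_nat (card H) else 0)"
proof (cases "\<forall>u\<in>H. zinner a b u v = 0")
  case False
  then obtain u0 where u0: "u0 \<in> H" "zinner a b u0 v \<noteq> 0" by auto
  let ?S = "\<Sum>u\<in>H. chi (zinner a b u v)"
  have "?S = (\<Sum>u\<in>H. chi (zinner a b (u0 + u) v))"
    using sum.reindex_bij_betw[OF zsubgroup_translate_bij[OF assms u0(1)],
        of "\<lambda>u. chi (zinner a b u v)"] by simp
  also have "\<dots> = chi (zinner a b u0 v) * ?S"
    by (simp add: zinner_add_left chi_add sum_distrib_left)
  finally have "(1 - chi (zinner a b u0 v)) * ?S = 0" by (simp add: algebra_simps)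
  moreover have "1 - chi (zinner a b u0 v) \<noteq> 0" using u0(2) chi_eq_1_iff by simp
  ultimately show ?thesis using False by auto
qed (simp add: chi_def)

theorem card_mult_card_zdual:
  assumes "zsubgroup H" "H \<subseteq> zwords a b"
  shows "card H * card (zdual a b H) = card (zwords a b)"
proof -
  let ?\<Sigma> = "\<Sum>v\<in>zwords a b. \<Sum>u\<in>H. chi (zinner a b u v)"
  have "?\<Sigma> = (\<Sum>v\<in>zwords a b. if \<forall>u\<in>H. zinner a b u v = 0 then of_nat (card H) else 0)"
    using sum_chi_zinner[OF assms(1)] by simp
  also have "\<dots> = (\<Sum>v\<in>zdual a b H. of_nat (card H))"
    unfolding zdual_def by (rule sum.inter_filter[symmetric]) simp
  finally have 1: "?\<Sigma> = of_nat (card H * card (zdual a b H))" by simp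
  have "finite H" using finite_subset[OF assms(2)] by simp
  have "?\<Sigma> = (\<Sum>u\<in>H. \<Sum>v\<in>zwords a b. chi (zinner a b v u))"
    by (subst sum.swap) (simp add: zinner_commute)
  also have "\<dots> = (\<Sum>u\<in>H. if \<forall>v\<in>zwords a b. zinner a b v u = 0 then of_nat (card (zwords a b)) else 0)"
    using sum_chi_zinner[OF zsubgroup_zwords] by simp
  also have "\<dots> = (\<Sum>u\<in>{u\<in>H. \<forall>v\<in>zwords a b. zinner a b v u = 0}. of_nat (card (zwords a b)))"
    by (rule sum.inter_filter[symmetric]) fact
  also have "{u\<in>H. \<forall>v\<in>zwords a b. zinner a b v u = 0} = {0}"
    using assms zwords_orthogonal_all zsubgroup_0 by (auto simp del: split_paired_All)
  finally have 2: "?\<Sigma> = of_nat (card (zwords a b))" by simp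
  from 1 2 show ?thesis by (metis of_nat_eq_iff)
qed


section \<open>The Gray map is an isometry for the Lee weight\<close>

definition lee :: "4 \<Rightarrow> nat" where
  "lee x = (if x = 0 then 0 else if x = 2 then 2 else 1)"

definition lee_weight :: "nat \<Rightarrow> nat \<Rightarrow> zword \<Rightarrow> nat" where
  "lee_weight a b d = card {i. i < a \<and> fst d i \<noteq> 0} + (\<Sum>j<b. lee (snd d j))"

lemma lee_eq_0_iff [simp]: "lee x = 0 \<longleftrightarrow> x = 0"
  and lee_0 [simp]: "lee 0 = 0"
  by (simp_all add: lee_def)

lemma lee_eq_1_iff: "lee x = 1 \<longleftrightarrow> x = 1 \<or> x = - 1"
  using z4_cases[of x] by (auto simp: lee_def)

lemma gray_distance:
  assumes "p < 4" "q < 4"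
  shows "of_bool (fst (gray p) \<noteq> fst (gray q)) + of_bool (snd (gray p) \<noteq> snd (gray q))
           = lee (of_nat p - of_nat q)"
proof -
  have "p \<in> {0,1,2,3}" "q \<in> {0,1,2,3}" using assms by auto
  then show ?thesis by (auto simp: gray_def lee_def)
qed

lemma sum_lessThan_add_double:
  "(\<Sum>p<a + 2 * b. h p) = (\<Sum>p<a. h p) + (\<Sum>j<b. h (a + 2 * j) + h (Suc (a + 2 * j)))"
  by (induction b) (simp_all add: algebra_simps)

lemma hdist_Gray:
  assumes x: "x \<in> Z24 a b" and y: "y \<in> Z24 a b"
  shows "hdist (a + 2 * b) (Gray a b x) (Gray a b y) = lee_weight a b (zword_of x - zword_of y)"
proof -
  let ?d = "zword_of x - zword_of y"
  have X: "of_bool (fst x i \<noteq> fst y i) = of_bool (fst ?d i \<noteq> 0)" for i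
    using of_nat_eq_iff_2[OF Z24_fst_less[OF x] Z24_fst_less[OF y]] by (simp add: zword_of_def)
  have Z: "of_bool (fst (gray (snd x j)) \<noteq> fst (gray (snd y j)))
             + of_bool (snd (gray (snd x j)) \<noteq> snd (gray (snd y j))) = lee (snd ?d j)" for j
    using gray_distance[OF Z24_snd_less[OF x] Z24_snd_less[OF y]] by (simp add: zword_of_def)
  have "hdist (a + 2 * b) (Gray a b x) (Gray a b y)
          = (\<Sum>p<a + 2 * b. of_bool (Gray a b x p \<noteq> Gray a b y p))"
    by (simp add: hdist_def Int_def)
  also have "\<dots> = (\<Sum>i<a. of_bool (fst x i \<noteq> fst y i))
      + (\<Sum>j<b. of_bool (fst (gray (snd x j)) \<noteq> fst (gray (snd y j)))
                + of_bool (snd (gray (snd x j)) \<noteq> snd (gray (snd y j))))"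
    unfolding sum_lessThan_add_double by (simp add: Gray_def)
  also have "\<dots> = (\<Sum>i<a. of_bool (fst ?d i \<noteq> 0)) + (\<Sum>j<b. lee (snd ?d j))"
    by (simp only: X Z)
  also have "\<dots> = lee_weight a b ?d"
    by (simp add: lee_weight_def Int_def)
  finally show ?thesis .
qed

lemma zwords_eq_0I:
  assumes "d \<in> zwords a b" "\<forall>i<a. fst d i = 0" "\<forall>j<b. snd d j = 0"
  shows "d = 0"
proof -
  have "fst d i = 0" for i
    using assms by (cases "i < a") (auto simp: zwords_def)
  moreover have "snd d j = 0" for j
    using assms by (cases "j < b") (auto simp: zwords_def)
  ultimately show ?thesis by (simp add: prod_eq_iff fun_eq_iff)
qed

lemma lee_weight_eq_0_iff:
  assumes "d \<in> zwords a b"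
  shows "lee_weight a b d = 0 \<longleftrightarrow> d = 0"
proof
  assume "lee_weight a b d = 0"
  then have "\<forall>i<a. fst d i = 0" "\<forall>j<b. snd d j = 0"
    by (auto simp: lee_weight_def)
  then show "d = 0" using zwords_eq_0I assms by blast
qed (simp add: lee_weight_def)

definition zball :: "nat \<Rightarrow> nat \<Rightarrow> zword set" where
  "zball a b = insert 0 (unit_X ` {..<a} \<union> unit_Z ` {..<b} \<union> (\<lambda>j. - unit_Z j) ` {..<b})"

lemma zball_subset_zwords: "zball a b \<subseteq> zwords a b"
  by (auto simp: zball_def unit_X_in_zwords unit_Z_in_zwords)

lemma lee_weight_le_1_X:
  assumes d: "d \<in> zwords a b" and w: "lee_weight a b d \<le> 1" and i: "i < a" "fst d i \<noteq> 0"
  shows "d = unit_X i"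
proof -
  have "card {i. i < a \<and> fst d i \<noteq> 0} \<noteq> 0" using i by auto
  moreover have "card {i. i < a \<and> fst d i \<noteq> 0} + (\<Sum>j<b. lee (snd d j)) \<le> 1"
    using w by (simp add: lee_weight_def)
  ultimately have card: "card {i. i < a \<and> fst d i \<noteq> 0} \<le> 1" and "(\<Sum>j<b. lee (snd d j)) = 0"
    by linarith+
  then have "\<forall>j<b. snd d j = 0" by simp
  moreover have "\<forall>k<a. k \<noteq> i \<longrightarrow> fst d k = 0"
    using card i card_le_Suc0_iff_eq[of "{i. i < a \<and> fst d i \<noteq> 0}"] by auto
  moreover have "d - unit_X i \<in> zwords a b" using d unit_X_in_zwords[OF i(1)] by simp
  ultimately have "d - unit_X i = 0"
    using i z2_cases[of "fst d i"] by (intro zwords_eq_0I[of _ a b]) (auto simp: unit_X_def)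
  then show ?thesis by simp
qed

lemma lee_weight_le_1_Z:
  assumes d: "d \<in> zwords a b" and w: "lee_weight a b d \<le> 1" and fst_d: "fst d = 0"
    and j: "j < b" "snd d j \<noteq> 0"
  shows "d = unit_Z j \<or> d = - unit_Z j"
proof -
  have "lee (snd d j) + (\<Sum>k\<in>{..<b} - {j}. lee (snd d k)) \<le> 1"
    using w j(1) by (simp add: lee_weight_def fst_d sum.remove)
  moreover have "lee (snd d j) \<noteq> 0" using j(2) by simp
  ultimately have "lee (snd d j) = 1" and others: "(\<Sum>k\<in>{..<b} - {j}. lee (snd d k)) = 0"
    by linarith+
  have rest: "\<forall>k<b. k \<noteq> j \<longrightarrow> snd d k = 0" using others by simp
  from \<open>lee (snd d j) = 1\<close> have "snd d j = 1 \<or> snd d j = - 1" using lee_eq_1_iff by blast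
  then show ?thesis
  proof
    assume "snd d j = 1"
    have "d - unit_Z j = 0"
      by (rule zwords_eq_0I[of _ a b]) (use d unit_Z_in_zwords[OF j(1)] fst_d rest \<open>snd d j = 1\<close> in
          \<open>auto simp: unit_Z_def\<close>)
    then show ?thesis by simp
  next
    assume "snd d j = - 1"
    have "d + unit_Z j = 0"
      by (rule zwords_eq_0I[of _ a b]) (use d unit_Z_in_zwords[OF j(1)] fst_d rest \<open>snd d j = - 1\<close> in
          \<open>auto simp: unit_Z_def\<close>)
    then show ?thesis by (simp add: add_eq_0_iff2)
  qed
qed

lemma lee_weight_le_1_iff:
  assumes d: "d \<in> zwords a b"
  shows "lee_weight a b d \<le> 1 \<longleftrightarrow> d \<in> zball a b"
proof
  assume w: "lee_weight a b d \<le> 1"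
  show "d \<in> zball a b"
  proof (cases "\<exists>i<a. fst d i \<noteq> 0")
    case True
    then show ?thesis using lee_weight_le_1_X[OF d w] by (auto simp: zball_def)
  next
    case False
    then have fst_d: "fst d = 0" using d by (auto simp: zwords_def fun_eq_iff dest: leI)
    show ?thesis
    proof (cases "\<exists>j<b. snd d j \<noteq> 0")
      case True
      then show ?thesis using lee_weight_le_1_Z[OF d w fst_d] by (auto simp: zball_def)
    next
      case False
      then have "d = 0" using d fst_d by (auto intro!: zwords_eq_0I[of _ a b])
      then show ?thesis by (simp add: zball_def)
    qed
  qed
next
  have "lee_weight a b (unit_X i) = 1" if "i < a" for i
  proof -
    have "{k. k < a \<and> fst (unit_X i) k \<noteq> 0} = {i}" using that by (auto simp: unit_X_def)
    then show ?thesis by (simp add: lee_weight_def unit_X_def)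
  qed
  moreover have "lee_weight a b (unit_Z j) = 1" "lee_weight a b (- unit_Z j) = 1" if "j < b" for j
    using that by (simp_all add: lee_weight_def unit_Z_def lee_def if_distrib cong: if_cong)
  moreover have "lee_weight a b 0 = 0" by (simp add: lee_weight_def)
  ultimately show "d \<in> zball a b \<Longrightarrow> lee_weight a b d \<le> 1"
    by (auto simp: zball_def)
qed

lemma hdist_Gray_le_1_iff:
  assumes "x \<in> Z24 a b" "y \<in> Z24 a b"
  shows "hdist (a + 2 * b) (Gray a b x) (Gray a b y) \<le> 1 \<longleftrightarrow> zword_of x - zword_of y \<in> zball a b"
  using hdist_Gray[OF assms] lee_weight_le_1_iff[OF zwords_diff[OF zword_of_in_zwords[OF assms(1)]
      zword_of_in_zwords[OF assms(2)]]] by simp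

lemma inj_on_Gray: "inj_on (Gray a b) (Z24 a b)"
proof (rule inj_onI)
  fix x y assume x: "x \<in> Z24 a b" and y: "y \<in> Z24 a b" and "Gray a b x = Gray a b y"
  then have "lee_weight a b (zword_of x - zword_of y) = 0"
    by (simp add: hdist_Gray[symmetric] hdist_def)
  then have "zword_of x = zword_of y"
    using lee_weight_eq_0_iff x y zword_of_in_zwords by (metis zwords_diff eq_iff_diff_eq_0)
  then show "x = y" using inj_on_zword_of x y by (metis inj_onD)
qed

lemma Gray_in_binvecs: "x \<in> Z24 a b \<Longrightarrow> Gray a b x \<in> binvecs (a + 2 * b)"
proof -
  assume x: "x \<in> Z24 a b"
  then have "fst (gray (snd x j)) < 2" "snd (gray (snd x j)) < 2" for j
    using Z24_snd_less[OF x, of j] by (auto simp: gray_def)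
  then show ?thesis using Z24_fst_less[OF x] by (auto simp: binvecs_def Gray_def)
qed

lemma card_zball: "card (zball a b) = 1 + a + 2 * b"
proof -
  let ?A = "unit_X ` {..<a}" and ?B = "unit_Z ` {..<b}" and ?B' = "(\<lambda>j. - unit_Z j) ` {..<b}"
  have inj: "inj unit_X" "inj unit_Z" "inj (\<lambda>j. - unit_Z j)"
    using inj_unit_X inj_unit_Z by (auto simp: inj_def)
  have "unit_X i \<noteq> unit_Z j" "unit_X i \<noteq> - unit_Z j" for i j
    by (rule notI, drule arg_cong[where f="\<lambda>w. fst w i"], simp add: unit_X_def unit_Z_def)+
  moreover have "unit_Z j \<noteq> - unit_Z k" for j k
    by (rule notI, drule arg_cong[where f="\<lambda>w. snd w j"]) (simp add: unit_Z_def split: if_splits)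
  ultimately have "?A \<inter> ?B = {}" "(?A \<union> ?B) \<inter> ?B' = {}" "0 \<notin> ?A \<union> ?B \<union> ?B'"
    using unit_X_neq_0 unit_Z_neq_0 by (auto simp: neg_equal_0_iff_equal) metis+
  then have "card (zball a b) = 1 + (card ?A + card ?B + card ?B')"
    by (simp add: zball_def card_Un_disjoint)
  then show ?thesis using inj by (simp add: card_image inj_on_subset[OF _ subset_UNIV])
qed


section \<open>Binary linear algebra\<close>

definition lincomb :: "nat \<Rightarrow> (nat \<Rightarrow> nat \<Rightarrow> 2) \<Rightarrow> (nat \<Rightarrow> nat) \<Rightarrow> nat \<Rightarrow> 2" where
  "lincomb m g c = (\<lambda>j. \<Sum>k<m. of_nat (c k) * g k j)"

definition z2_subspace :: "(nat \<Rightarrow> 2) set \<Rightarrow> bool" where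
  "z2_subspace V \<longleftrightarrow> 0 \<in> V \<and> (\<forall>x\<in>V. \<forall>y\<in>V. x + y \<in> V)"

lemma z2_fun_add_self [simp]: "(x :: nat \<Rightarrow> 2) + x = 0"
  by (rule ext) (simp only: plus_fun_apply zero_fun_apply z2_add_self)

lemma lincomb_Suc: "lincomb (Suc m) g c = lincomb m g c + (\<lambda>j. of_nat (c m) * g m j)"
  by (simp add: lincomb_def fun_eq_iff)

lemma lincomb_cong: "\<forall>k<m. c k = c' k \<Longrightarrow> \<forall>k<m. g k = g' k \<Longrightarrow> lincomb m g c = lincomb m g' c'"
  by (simp add: lincomb_def)

lemma lincomb_Suc_upd:
  "lincomb (Suc m) (g(m := v)) c = lincomb m g (c(m := 0)) + (\<lambda>j. of_nat (c m) * v j)"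
proof -
  have "lincomb m (g(m := v)) c = lincomb m g (c(m := 0))" by (rule lincomb_cong) simp_all
  then show ?thesis by (simp add: lincomb_Suc)
qed

lemma lincomb_add: "lincomb m g c + lincomb m g c' = lincomb m g (\<lambda>k. (c k + c' k) mod 2)"
  by (simp add: lincomb_def fun_eq_iff of_nat_mod_2 sum.distrib[symmetric] distrib_right)

lemma lincomb_eq_0_at: "\<forall>k<m. g k j = 0 \<Longrightarrow> lincomb m g c j = 0"
  by (simp add: lincomb_def)

lemma lincomb_in_subspace: "z2_subspace V \<Longrightarrow> \<forall>k<m. g k \<in> V \<Longrightarrow> lincomb m g c \<in> V"
proof (induction m)
  case 0
  then show ?case by (simp add: lincomb_def z2_subspace_def zero_fun_def)
next
  case (Suc m)
  have "(\<lambda>j. of_nat (c m) * g m j) \<in> {0, g m}"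
    using z2_cases[of "of_nat (c m)"] by (auto simp: fun_eq_iff)
  then have "(\<lambda>j. of_nat (c m) * g m j) \<in> V"
    using Suc.prems by (auto simp: z2_subspace_def)
  moreover have "lincomb m g c \<in> V" using Suc by simp
  ultimately show ?case
    using Suc.prems(1) unfolding lincomb_Suc z2_subspace_def by blast
qed

lemma z2_fun_eq_iff_add_eq_0: "(x :: nat \<Rightarrow> 2) = y \<longleftrightarrow> x + y = 0"
proof -
  have "- y = y" by (rule ext) simp
  then show ?thesis using eq_neg_iff_add_eq_0[of x y] by metis
qed

lemma inj_on_lincomb_iff:
  "inj_on (lincomb m g) (binvecs m) \<longleftrightarrow> (\<forall>c\<in>binvecs m. lincomb m g c = 0 \<longrightarrow> c = (\<lambda>_. 0))"
proof
  assume "inj_on (lincomb m g) (binvecs m)"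
  moreover have "lincomb m g (\<lambda>_. 0) = 0" "(\<lambda>_. 0) \<in> binvecs m"
    by (simp_all add: lincomb_def binvecs_def zero_fun_def)
  ultimately show "\<forall>c\<in>binvecs m. lincomb m g c = 0 \<longrightarrow> c = (\<lambda>_. 0)"
    by (metis inj_onD)
next
  assume ker: "\<forall>c\<in>binvecs m. lincomb m g c = 0 \<longrightarrow> c = (\<lambda>_. 0)"
  show "inj_on (lincomb m g) (binvecs m)"
  proof (rule inj_onI)
    fix c1 c2 assume c: "c1 \<in> binvecs m" "c2 \<in> binvecs m" "lincomb m g c1 = lincomb m g c2"
    then have "lincomb m g (\<lambda>k. (c1 k + c2 k) mod 2) = 0"
      by (simp add: lincomb_add[symmetric] z2_fun_eq_iff_add_eq_0[symmetric])
    moreover have "(\<lambda>k. (c1 k + c2 k) mod 2) \<in> binvecs m"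
      using c by (auto simp: binvecs_def)
    ultimately have sum0: "(\<lambda>k. (c1 k + c2 k) mod 2) = (\<lambda>_. 0)" using ker by blast
    show "c1 = c2"
    proof
      fix k
      have "(c1 k + c2 k) mod 2 = 0" using fun_cong[OF sum0, of k] by simp
      moreover have "c1 k < 2" "c2 k < 2"
        using c by (cases "k < m"; auto simp: binvecs_def)+
      ultimately show "c1 k = c2 k" by presburger
    qed
  qed
qed

lemma inj_on_lincomb_extend:
  assumes inj: "inj_on (lincomb m g) (binvecs m)" and v: "v \<notin> lincomb m g ` binvecs m"
  shows "inj_on (lincomb (Suc m) (g(m := v))) (binvecs (Suc m))"
  unfolding inj_on_lincomb_iff
proof (intro ballI impI)
  fix c assume c: "c \<in> binvecs (Suc m)" and zero: "lincomb (Suc m) (g(m := v)) c = 0"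
  have c': "c(m := 0) \<in> binvecs m" "c m < 2" using c by (auto simp: binvecs_def)
  have sum0: "lincomb m g (c(m := 0)) + (\<lambda>j. of_nat (c m) * v j) = 0"
    using zero by (simp only: lincomb_Suc_upd)
  have "c m = 0"
  proof (rule ccontr)
    assume "c m \<noteq> 0"
    then have "c m = 1" using c' by simp
    then have "(\<lambda>j. of_nat (c m) * v j) = v" by simp
    then have "lincomb m g (c(m := 0)) + v = 0" using sum0 by simp
    then have "v = lincomb m g (c(m := 0))"
      by (metis add.commute z2_fun_eq_iff_add_eq_0)
    then show False using v c'(1) by blast
  qed
  then have "(\<lambda>j. of_nat (c m) * v j) = 0" by (simp add: fun_eq_iff)
  then have "lincomb m g (c(m := 0)) = 0" using sum0 by simp
  then have "c(m := 0) = (\<lambda>_. 0)" using inj c'(1) unfolding inj_on_lincomb_iff by blast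
  then show "c = (\<lambda>_. 0)" using \<open>c m = 0\<close> by (metis fun_upd_triv)
qed

text \<open>A basis of length \<open>m\<close> is chosen with \<open>m\<close> maximal; \<open>2\<^sup>m \<le> |V|\<close> bounds \<open>m\<close>.\<close>

lemma exists_basis:
  assumes fin: "finite V" and V: "z2_subspace V"
  shows "\<exists>m g. (\<forall>k<m. g k \<in> V) \<and> inj_on (lincomb m g) (binvecs m) \<and> lincomb m g ` binvecs m = V"
proof -
  define M where "M = {m. \<exists>g. (\<forall>k<m. g k \<in> V) \<and> inj_on (lincomb m g) (binvecs m)}"
  have bound: "m \<le> card V" if m: "m \<in> M" for m
  proof -
    obtain g where g: "\<forall>k<m. g k \<in> V" "inj_on (lincomb m g) (binvecs m)"
      using m unfolding M_def by blast
    have "lincomb m g ` binvecs m \<subseteq> V" using lincomb_in_subspace[OF V g(1)] by blast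
    then have "2 ^ m \<le> card V"
      using card_mono[OF fin] g(2) finite_card_binvecs[of m] by (metis card_image)
    then show ?thesis using less_exp[of m] by linarith
  qed
  have "binvecs 0 = {\<lambda>_. 0}" by (auto simp: binvecs_def)
  then have "0 \<in> M" by (simp add: M_def)
  moreover have fin_M: "finite M" using bound by (meson finite_nat_set_iff_bounded_le)
  ultimately have "Max M \<in> M" using Max_in by blast
  have max: "\<And>m. m \<in> M \<Longrightarrow> m \<le> Max M" using fin_M by simp
  from \<open>Max M \<in> M\<close> obtain g where g: "\<forall>k<Max M. g k \<in> V" "inj_on (lincomb (Max M) g) (binvecs (Max M))"
    unfolding M_def by blast
  have "lincomb (Max M) g ` binvecs (Max M) = V"
  proof (rule ccontr)
    assume "lincomb (Max M) g ` binvecs (Max M) \<noteq> V"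
    then obtain v where v: "v \<in> V" "v \<notin> lincomb (Max M) g ` binvecs (Max M)"
      using lincomb_in_subspace[OF V g(1)] by blast
    have "\<forall>k<Suc (Max M). (g(Max M := v)) k \<in> V" using g(1) v(1) by (simp add: less_Suc_eq)
    then have "Suc (Max M) \<in> M"
      using inj_on_lincomb_extend[OF g(2) v(2)] unfolding M_def by blast
    then show False using max by fastforce
  qed
  then show ?thesis using g by blast
qed

definition column :: "nat \<Rightarrow> (nat \<Rightarrow> nat \<Rightarrow> 2) \<Rightarrow> nat \<Rightarrow> nat \<Rightarrow> nat" where
  "column m g j = (\<lambda>k. if k < m then z2_to_nat (g k j) else 0)"

lemma columns_nonzero_inj:
  assumes nonzero: "\<forall>j<n. \<exists>k<m. g k j \<noteq> 0"
    and distinct: "\<forall>i<n. \<forall>j<n. i \<noteq> j \<longrightarrow> (\<exists>k<m. g k i \<noteq> g k j)"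
  shows "inj_on (column m g) {..<n}" and "column m g ` {..<n} \<subseteq> binvecs m - {\<lambda>_. 0}"
proof -
  show "inj_on (column m g) {..<n}"
  proof (rule inj_onI, rule ccontr)
    fix i j assume ij: "i \<in> {..<n}" "j \<in> {..<n}" "column m g i = column m g j" "i \<noteq> j"
    have "g k i = g k j" if "k < m" for k
      using fun_cong[OF ij(3), of k] that by (simp add: column_def z2_to_nat_inject)
    then show False using distinct ij by auto
  qed
  show "column m g ` {..<n} \<subseteq> binvecs m - {\<lambda>_. 0}"
  proof (rule image_subsetI)
    fix j assume "j \<in> {..<n}"
    then obtain k where "k < m" "g k j \<noteq> 0" using nonzero by blast
    then have "column m g j k \<noteq> 0" by (simp add: column_def)
    moreover have "column m g j \<in> binvecs m" by (simp add: column_def binvecs_def z2_to_nat_less)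
    ultimately show "column m g j \<in> binvecs m - {\<lambda>_. 0}" by auto
  qed
qed

lemma length_le_of_columns:
  fixes g :: "nat \<Rightarrow> nat \<Rightarrow> 2"
  assumes "\<forall>j<n. \<exists>k<m. g k j \<noteq> 0" "\<forall>i<n. \<forall>j<n. i \<noteq> j \<longrightarrow> (\<exists>k<m. g k i \<noteq> g k j)"
  shows "n \<le> 2 ^ m - 1"
  using card_inj_on_le[OF columns_nonzero_inj(1,2)[OF assms]] finite_card_binvecs[of m]
  by (simp add: card_binvecs_nonzero)

lemma simplex_code_lincomb:
  fixes g :: "nat \<Rightarrow> nat \<Rightarrow> 2"
  assumes n: "n = 2 ^ r - 1"
    and support: "\<forall>k<r. \<forall>j\<ge>n. g k j = 0"
    and nonzero: "\<forall>j<n. \<exists>k<r. g k j \<noteq> 0"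
    and distinct: "\<forall>i<n. \<forall>j<n. i \<noteq> j \<longrightarrow> (\<exists>k<r. g k i \<noteq> g k j)"
  shows "simplex_code r n ((\<lambda>v j. z2_to_nat (v j)) ` lincomb r g ` binvecs r)"
proof -
  define h where "h k j = (if k < r then z2_to_nat (g k j) else 0)" for k j
  have h_bin: "\<forall>k<r. h k \<in> binvecs n"
    using support by (auto simp: h_def binvecs_def z2_to_nat_less)
  have "column r g ` {..<n} = binvecs r - {\<lambda>_. 0}"
    using columns_nonzero_inj(2)[OF nonzero distinct] finite_card_binvecs[of r]
      card_image[OF columns_nonzero_inj(1)[OF nonzero distinct]]
    by (intro card_subset_eq) (simp_all add: card_binvecs_nonzero n)
  moreover have "(\<lambda>j k. if k < r then h k j else 0) = column r g"
    by (simp add: h_def column_def fun_eq_iff)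
  ultimately have bij: "bij_betw (\<lambda>j k. if k < r then h k j else 0) {..<n} (binvecs r - {\<lambda>_. 0})"
    using columns_nonzero_inj(1)[OF nonzero distinct] by (simp add: bij_betw_def)
  have "z2_to_nat (lincomb r g c j) = (if j < n then (\<Sum>k<r. c k * h k j) mod 2 else 0)" for c j
  proof (cases "j < n")
    case True
    have "(of_nat (\<Sum>k<r. c k * h k j) :: 2) = lincomb r g c j"
      by (simp add: lincomb_def h_def)
    then show ?thesis using True by (metis z2_to_nat_of_nat)
  next
    case False
    then show ?thesis using support lincomb_eq_0_at[of r g j c] by (simp add: z2_to_nat_def)
  qed
  then have "(\<lambda>v j. z2_to_nat (v j)) ` lincomb r g ` binvecs r
      = {(\<lambda>j. if j < n then (\<Sum>k<r. c k * h k j) mod 2 else 0) | c. c \<in> binvecs r}"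
    by (auto simp: image_image)
  then show ?thesis
    unfolding simplex_code_def using n h_bin bij by blast
qed

section \<open>Perfect codes tile the ambient group\<close>

locale z24_perfect_code =
  fixes r a b :: nat and C :: "z24vec set"
  assumes r_pos: "0 < r"
    and a_eq: "a = 2 ^ r - 1"
    and b_eq: "b = 2 ^ (r - 1) * (2 ^ r - 1)"
    and additive: "z24_additive a b C"
    and perfect: "z24_perfect1 a b C"
begin

definition Cw :: "zword set" where
  "Cw = zword_of ` C"

definition Dw :: "zword set" where
  "Dw = zdual a b Cw"

lemma C_subset_Z24: "C \<subseteq> Z24 a b"
  using additive by (simp add: z24_additive_def)

lemma Cw_subset: "Cw \<subseteq> zwords a b"
  using C_subset_Z24 zword_of_in_zwords unfolding Cw_def by blast

lemma zsubgroup_Cw: "zsubgroup Cw"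
  unfolding Cw_def using additive by (rule zsubgroup_zword_of)

lemma Dw_subset: "Dw \<subseteq> zwords a b"
  by (auto simp: Dw_def zdual_def)

lemma zsubgroup_Dw: "zsubgroup Dw"
  unfolding Dw_def by (rule zsubgroup_zdual)

lemma finite_Cw: "finite Cw" and finite_Dw: "finite Dw"
  using finite_subset[OF Cw_subset] finite_subset[OF Dw_subset] by simp_all

lemma one_plus_a: "1 + a = 2 ^ r"
  using a_eq by simp

lemma card_zball_eq: "card (zball a b) = 4 ^ r"
proof -
  have "2 * 2 ^ (r - 1) = (2::nat) ^ r"
    using r_pos by (simp flip: power_Suc)
  then have "1 + a + 2 * b = 2 ^ r + 2 ^ r * (2 ^ r - 1)"
    by (simp add: a_eq b_eq)
  also have "\<dots> = 2 ^ r * 2 ^ r"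
    by (simp add: algebra_simps)
  also have "\<dots> = (4::nat) ^ r"
    by (simp flip: power_mult_distrib)
  finally show ?thesis by (simp add: card_zball)
qed

lemma ex1_zball_rep: "w \<in> zwords a b \<Longrightarrow> \<exists>!e. e \<in> zball a b \<and> w - e \<in> Cw"
proof -
  assume w: "w \<in> zwords a b"
  define x where "x = z24vec_of w"
  have x: "x \<in> Z24 a b" "zword_of x = w" using w z24vec_of_in_Z24 by (auto simp: x_def)
  have close_iff: "hdist (a + 2 * b) (Gray a b x) (Gray a b c) \<le> 1 \<longleftrightarrow> w - zword_of c \<in> zball a b"
    if "c \<in> C" for c
  proof -
    have "c \<in> Z24 a b" using that C_subset_Z24 by blast
    then show ?thesis using hdist_Gray_le_1_iff[OF x(1)] x(2) by simp
  qed
  have "\<exists>!g. g \<in> Gray a b ` C \<and> hdist (a + 2 * b) (Gray a b x) g \<le> 1"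
    using perfect Gray_in_binvecs[OF x(1)] by (simp add: z24_perfect1_def perfect1_def)
  then obtain g where g: "g \<in> Gray a b ` C" "hdist (a + 2 * b) (Gray a b x) g \<le> 1"
    and uniq: "\<And>c'. c' \<in> C \<Longrightarrow> hdist (a + 2 * b) (Gray a b x) (Gray a b c') \<le> 1
                 \<Longrightarrow> Gray a b c' = g"
    by blast
  obtain c where c: "c \<in> C" "g = Gray a b c" using g(1) by blast
  show ?thesis
  proof (rule ex1I)
    show "w - zword_of c \<in> zball a b \<and> w - (w - zword_of c) \<in> Cw"
      using c g(2) close_iff by (simp add: Cw_def)
  next
    fix e assume e: "e \<in> zball a b \<and> w - e \<in> Cw"
    then obtain c' where c': "c' \<in> C" "w - e = zword_of c'" by (auto simp: Cw_def)
    then have "w - zword_of c' = e" by (simp flip: c'(2))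
    then have "Gray a b c' = Gray a b c"
      using uniq[OF c'(1)] close_iff[OF c'(1)] e c(2) by simp
    moreover have "c \<in> Z24 a b" "c' \<in> Z24 a b" using c(1) c'(1) C_subset_Z24 by auto
    ultimately have "c' = c" using inj_on_Gray[of a b] by (simp add: inj_on_def)
    then show "e = w - zword_of c" using c' by (simp add: algebra_simps)
  qed
qed

definition zball_rep :: "zword \<Rightarrow> zword" where
  "zball_rep w = (THE e. e \<in> zball a b \<and> w - e \<in> Cw)"

lemma zball_rep: "w \<in> zwords a b \<Longrightarrow> zball_rep w \<in> zball a b \<and> w - zball_rep w \<in> Cw"
  unfolding zball_rep_def by (rule theI'[OF ex1_zball_rep])

lemma zball_rep_unique: "w \<in> zwords a b \<Longrightarrow> e \<in> zball a b \<Longrightarrow> w - e \<in> Cw \<Longrightarrow> zball_rep w = e"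
  unfolding zball_rep_def by (rule the1_equality[OF ex1_zball_rep]) auto

lemma zball_rep_self: "e \<in> zball a b \<Longrightarrow> zball_rep e = e"
  using zball_subset_zwords zsubgroup_0[OF zsubgroup_Cw] by (intro zball_rep_unique) auto

lemma zball_rep_eq_iff:
  assumes "u \<in> zwords a b" "v \<in> zwords a b"
  shows "zball_rep u = zball_rep v \<longleftrightarrow> u - v \<in> Cw"
proof
  assume eq: "zball_rep u = zball_rep v"
  have "u - zball_rep u \<in> Cw" "v - zball_rep v \<in> Cw" using zball_rep assms by blast+
  then have "(u - zball_rep u) - (v - zball_rep v) \<in> Cw" by (rule zsubgroup_diff[OF zsubgroup_Cw])
  then show "u - v \<in> Cw" using eq by simp
next
  assume "u - v \<in> Cw"
  then have "(u - v) + (v - zball_rep v) \<in> Cw"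
    using zball_rep[OF assms(2)] zsubgroup_add[OF zsubgroup_Cw] by blast
  then show "zball_rep u = zball_rep v"
    using zball_rep_unique[OF assms(1)] zball_rep[OF assms(2)] by simp
qed

lemma zball_diff_in_Cw:
  assumes "e \<in> zball a b" "e' \<in> zball a b" "e - e' \<in> Cw"
  shows "e = e'"
proof -
  have "e \<in> zwords a b" "e' \<in> zwords a b" using assms(1,2) zball_subset_zwords by blast+
  then have "zball_rep e = zball_rep e'" using zball_rep_eq_iff assms(3) by blast
  then show ?thesis using zball_rep_self assms(1,2) by simp
qed

lemma image_zball_rep: "zball_rep ` zwords a b = zball a b"
proof
  show "zball a b \<subseteq> zball_rep ` zwords a b"
  proof
    fix e assume "e \<in> zball a b"
    then show "e \<in> zball_rep ` zwords a b"
      using zball_rep_self zball_subset_zwords by (metis image_eqI subsetD)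
  qed
qed (use zball_rep in blast)

lemma card_zwords_eq: "card (zwords a b) = card Cw * 4 ^ r"
proof -
  have "card (zwords a b) = card (zball_rep ` zwords a b) * card Cw"
    by (rule card_zsubgroup_eq_card_image_mult[OF zsubgroup_zwords finite_zwords Cw_subset])
      (simp add: zball_rep_eq_iff)
  then show ?thesis by (simp add: image_zball_rep card_zball_eq)
qed

lemma card_Dw: "card Dw = 4 ^ r"
proof -
  have "card Cw * card Dw = card Cw * 4 ^ r"
    using card_mult_card_zdual[OF zsubgroup_Cw Cw_subset] card_zwords_eq by (simp add: Dw_def)
  moreover have "card Cw \<noteq> 0"
    using finite_Cw zsubgroup_0[OF zsubgroup_Cw] by auto
  ultimately show ?thesis by simp
qed

lemma zdual_Dw: "zdual a b Dw = Cw"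
proof -
  have "card Dw * card (zdual a b Dw) = card Dw * card Cw"
    using card_mult_card_zdual[OF zsubgroup_Dw Dw_subset] card_zwords_eq card_Dw by simp
  then have "card (zdual a b Dw) = card Cw" using card_Dw by simp
  moreover have "Cw \<subseteq> zdual a b Dw"
    using Cw_subset by (auto simp: zdual_def Dw_def zinner_commute)
  moreover have "finite (zdual a b Dw)"
    using finite_subset[of "zdual a b Dw" "zwords a b"] by (auto simp: zdual_def)
  ultimately show ?thesis using card_subset_eq by metis
qed

end


section \<open>Doubling and the order-two part of the dual\<close>

context z24_perfect_code
begin

definition zball_X :: "zword set" where
  "zball_X = insert 0 (unit_X ` {..<a})"

lemma zball_X_subset: "zball_X \<subseteq> zball a b"
  by (auto simp: zball_X_def zball_def)

lemma card_zball_X: "card zball_X = 2 ^ r"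
proof -
  have "0 \<notin> unit_X ` {..<a}" using unit_X_neq_0 by (metis imageE)
  then show ?thesis
    using one_plus_a inj_unit_X by (simp add: zball_X_def card_image inj_on_subset[OF _ subset_UNIV])
qed

text \<open>Doubling kills \<open>e\<^sub>i\<close>, whereas \<open>2f\<^sub>j = f\<^sub>j - (-f\<^sub>j)\<close> is a difference of two distinct points of
  the ball and so cannot lie in \<open>C\<close>.\<close>

lemma double_in_Cw_iff: "e \<in> zball a b \<Longrightarrow> e + e \<in> Cw \<longleftrightarrow> e \<in> zball_X"
proof
  assume e: "e \<in> zball a b" and ee: "e + e \<in> Cw"
  show "e \<in> zball_X"
  proof (rule ccontr)
    assume "e \<notin> zball_X"
    then obtain j where j: "j < b" "e = unit_Z j \<or> e = - unit_Z j"
      using e by (auto simp: zball_def zball_X_def)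
    then have "unit_Z j - (- unit_Z j) \<in> Cw"
      using ee zsubgroup_uminus[OF zsubgroup_Cw ee] by auto
    then have "unit_Z j = - unit_Z j"
      using j(1) by (intro zball_diff_in_Cw) (auto simp: zball_def)
    then show False using unit_Z_add_self_neq_0[of j] by (simp add: eq_neg_iff_add_eq_0)
  qed
next
  assume "e \<in> zball_X"
  then have "e + e = 0" by (auto simp: zball_X_def unit_X_add_self)
  then show "e + e \<in> Cw" using zsubgroup_0[OF zsubgroup_Cw] by simp
qed

lemma zball_rep_double: "w \<in> zwords a b \<Longrightarrow> zball_rep (w + w) \<in> zball_X"
proof -
  assume w: "w \<in> zwords a b"
  define e where "e = zball_rep (w + w)"
  have e: "e \<in> zball a b" "(w + w) - e \<in> Cw" using zball_rep[of "w + w"] w by (auto simp: e_def)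
  have "e + e = - ((w + w) - e) - ((w + w) - e)"
    using zword_four_times[of w] by (simp add: algebra_simps)
  also have "\<dots> \<in> Cw"
    using zsubgroup_diff[OF zsubgroup_Cw zsubgroup_uminus[OF zsubgroup_Cw e(2)] e(2)] .
  finally show ?thesis using double_in_Cw_iff[OF e(1)] by (simp add: e_def)
qed

definition halves_Cw :: "zword set" where
  "halves_Cw = {y \<in> zwords a b. y + y \<in> Cw}"

lemma zsubgroup_halves_Cw: "zsubgroup halves_Cw"
  unfolding zsubgroup_def halves_Cw_def
proof (intro conjI ballI CollectI)
  fix x y assume "x \<in> {y \<in> zwords a b. y + y \<in> Cw}" "y \<in> {y \<in> zwords a b. y + y \<in> Cw}"
  then have "x \<in> zwords a b" "y \<in> zwords a b" and sum: "(x + x) + (y + y) \<in> Cw"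
    using zsubgroup_add[OF zsubgroup_Cw] by blast+
  then show "x + y \<in> zwords a b" by simp
  have "(x + y) + (x + y) = (x + x) + (y + y)" by (simp add: algebra_simps)
  then show "(x + y) + (x + y) \<in> Cw" using sum by metis
qed (metis add_0_left zsubgroup_0 zsubgroup_Cw zwords_0)+

lemma image_zball_rep_halves_Cw: "zball_rep ` halves_Cw = zball_X"
proof
  show "zball_rep ` halves_Cw \<subseteq> zball_X"
  proof
    fix e assume "e \<in> zball_rep ` halves_Cw"
    then obtain y where y: "y \<in> zwords a b" "y + y \<in> Cw" "e = zball_rep y"
      by (auto simp: halves_Cw_def)
    then have e: "e \<in> zball a b" "y - e \<in> Cw" using zball_rep by auto
    have "(y + y) - ((y - e) + (y - e)) \<in> Cw"
      using zsubgroup_diff[OF zsubgroup_Cw y(2) zsubgroup_add[OF zsubgroup_Cw e(2) e(2)]] .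
    then have "e + e \<in> Cw" by (simp add: algebra_simps)
    then show "e \<in> zball_X" using double_in_Cw_iff[OF e(1)] by simp
  qed
  show "zball_X \<subseteq> zball_rep ` halves_Cw"
  proof
    fix e assume e: "e \<in> zball_X"
    then have eb: "e \<in> zball a b" using zball_X_subset by blast
    then have "e \<in> zwords a b" "e + e \<in> Cw"
      using zball_subset_zwords double_in_Cw_iff e by blast+
    then have "e \<in> halves_Cw" "zball_rep e = e"
      using zball_rep_self[OF eb] by (simp_all add: halves_Cw_def)
    then show "e \<in> zball_rep ` halves_Cw" by (metis image_eqI)
  qed
qed

lemma card_halves_Cw: "card halves_Cw = 2 ^ r * card Cw"
proof -
  have sub: "halves_Cw \<subseteq> zwords a b" "Cw \<subseteq> halves_Cw"
    using Cw_subset zsubgroup_add[OF zsubgroup_Cw] unfolding halves_Cw_def by blast+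
  have "card halves_Cw = card (zball_rep ` halves_Cw) * card Cw"
  proof (rule card_zsubgroup_eq_card_image_mult[OF zsubgroup_halves_Cw _ sub(2)])
    show "finite halves_Cw" using finite_subset[OF sub(1)] by simp
    fix x y assume "x \<in> halves_Cw" "y \<in> halves_Cw"
    then show "zball_rep y = zball_rep x \<longleftrightarrow> y - x \<in> Cw"
      using sub(1) zball_rep_eq_iff by blast
  qed
  then show ?thesis by (simp add: image_zball_rep_halves_Cw card_zball_X)
qed

text \<open>Counting the fibres of \<open>w \<mapsto> zball_rep (2w)\<close>, which are the cosets of \<open>halves_Cw\<close>, shows
  that every \<open>e\<^sub>i\<close> is attained.\<close>

lemma image_zball_rep_double: "(\<lambda>w. zball_rep (w + w)) ` zwords a b = zball_X"
proof -
  have "card (zwords a b) = card ((\<lambda>w. zball_rep (w + w)) ` zwords a b) * card halves_Cw"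
  proof (rule card_zsubgroup_eq_card_image_mult[OF zsubgroup_zwords finite_zwords])
    show "halves_Cw \<subseteq> zwords a b" by (auto simp: halves_Cw_def)
    fix x y assume "x \<in> zwords a b" "y \<in> zwords a b"
    then have "zball_rep (y + y) = zball_rep (x + x) \<longleftrightarrow> (y + y) - (x + x) \<in> Cw"
      by (simp add: zball_rep_eq_iff)
    also have "(y + y) - (x + x) = (y - x) + (y - x)" by (simp add: algebra_simps)
    finally show "zball_rep (y + y) = zball_rep (x + x) \<longleftrightarrow> y - x \<in> halves_Cw"
      using \<open>x \<in> zwords a b\<close> \<open>y \<in> zwords a b\<close> by (simp add: halves_Cw_def)
  qed
  then have "card Cw * 4 ^ r = card ((\<lambda>w. zball_rep (w + w)) ` zwords a b) * (2 ^ r * card Cw)"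
    by (simp add: card_zwords_eq card_halves_Cw)
  moreover have "card Cw \<noteq> 0" using finite_Cw zsubgroup_0[OF zsubgroup_Cw] by auto
  moreover have "(4::nat) ^ r = 2 ^ r * 2 ^ r" by (simp flip: power_mult_distrib)
  ultimately have "card ((\<lambda>w. zball_rep (w + w)) ` zwords a b) = card zball_X"
    by (simp add: card_zball_X)
  moreover have "finite zball_X" by (simp add: zball_X_def)
  moreover have "(\<lambda>w. zball_rep (w + w)) ` zwords a b \<subseteq> zball_X"
    using zball_rep_double by blast
  ultimately show ?thesis using card_subset_eq by blast
qed

lemma exists_double_minus_unit_X_in_Cw: "i < a \<Longrightarrow> \<exists>w\<in>zwords a b. (w + w) - unit_X i \<in> Cw"
proof -
  assume "i < a"
  then have "unit_X i \<in> (\<lambda>w. zball_rep (w + w)) ` zwords a b"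
    using image_zball_rep_double by (simp add: zball_X_def)
  then obtain w where "w \<in> zwords a b" "unit_X i = zball_rep (w + w)" by blast
  then show ?thesis using zball_rep[of "w + w"] by auto
qed

lemma zinner_Cw_Dw: "d \<in> Dw \<Longrightarrow> u \<in> Cw \<Longrightarrow> zinner a b u d = 0"
  by (simp add: Dw_def zdual_def)

lemma Dw_fst_eq_0_imp_double_eq_0:
  assumes d: "d \<in> Dw" and fst_d: "fst d = 0"
  shows "d + d = 0"
proof -
  have "snd d j + snd d j = 0" if j: "j < b" for j
  proof -
    define x where "x = unit_Z j + unit_Z j"
    have x: "x \<in> zwords a b" using unit_Z_in_zwords[OF j] by (simp add: x_def)
    then have "zball_rep x \<in> zball_X" using zball_rep_double unit_Z_in_zwords[OF j] by (simp add: x_def)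
    then have "zinner a b (zball_rep x) d = 0"
      using fst_d by (auto simp: zball_X_def zinner_unit_X)
    moreover have "zinner a b (x - zball_rep x) d = 0"
      using zinner_Cw_Dw[OF d] zball_rep[OF x] by blast
    ultimately have "zinner a b x d = 0" by (simp add: zinner_diff_left)
    then show ?thesis by (simp add: x_def zinner_add_left zinner_unit_Z[OF j])
  qed
  moreover have "snd d j = 0" if "b \<le> j" for j
    using d Dw_subset that by (auto simp: zwords_def)
  ultimately have "snd d j + snd d j = 0" for j
    by (cases "j < b") simp_all
  then show "d + d = 0" using fst_d by (simp add: prod_eq_iff fun_eq_iff)
qed

lemma Dw_double_eq_0_imp_fst_eq_0:
  assumes d: "d \<in> Dw" and dd: "d + d = 0"
  shows "fst d = 0"
proof -
  have "fst d i = 0" if i: "i < a" for i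
  proof -
    obtain w where w: "w \<in> zwords a b" "(w + w) - unit_X i \<in> Cw"
      using exists_double_minus_unit_X_in_Cw[OF i] by blast
    have "zinner a b (w + w) d = zinner a b w (d + d)"
      by (simp add: zinner_add_left zinner_add_right)
    then have "zinner a b (w + w) d = 0" using dd by simp
    moreover have "zinner a b ((w + w) - unit_X i) d = 0" using zinner_Cw_Dw[OF d w(2)] .
    ultimately have "zinner a b (unit_X i) d = 0" by (simp add: zinner_diff_left)
    then show ?thesis using zinner_unit_X[OF i] by simp
  qed
  moreover have "fst d i = 0" if "a \<le> i" for i
    using d Dw_subset that by (auto simp: zwords_def)
  ultimately have "fst d i = 0" for i
    by (cases "i < a") simp_all
  then show ?thesis by (simp add: fun_eq_iff)
qed

definition Dw_b :: "zword set" where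
  "Dw_b = {d \<in> Dw. d + d = 0}"

lemma Dw_b_subset: "Dw_b \<subseteq> Dw" and finite_Dw_b: "finite Dw_b"
  using finite_Dw by (auto simp: Dw_b_def)

lemma card_Dw_eq_card_fst_mult: "card Dw = card (fst ` Dw) * card Dw_b"
proof (rule card_zsubgroup_eq_card_image_mult[OF zsubgroup_Dw finite_Dw Dw_b_subset])
  fix x y assume "x \<in> Dw" "y \<in> Dw"
  then have "y - x \<in> Dw" using zsubgroup_diff[OF zsubgroup_Dw] by blast
  have "fst y = fst x \<longleftrightarrow> fst (y - x) = 0" by simp
  also have "\<dots> \<longleftrightarrow> y - x \<in> Dw_b"
    unfolding Dw_b_def
    using \<open>y - x \<in> Dw\<close> Dw_fst_eq_0_imp_double_eq_0 Dw_double_eq_0_imp_fst_eq_0 by blast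
  finally show "fst y = fst x \<longleftrightarrow> y - x \<in> Dw_b" .
qed

text \<open>\<open>D\<^sub>b\<close> is the kernel of \<open>d \<mapsto> 2d\<close> and contains its image \<open>2D\<close>, so \<open>|D| \<le> |D\<^sub>b|\<^sup>2\<close>.\<close>

lemma card_Dw_b_ge: "2 ^ r \<le> card Dw_b"
proof -
  have card_double: "card Dw = card ((\<lambda>d. d + d) ` Dw) * card Dw_b"
  proof (rule card_zsubgroup_eq_card_image_mult[OF zsubgroup_Dw finite_Dw Dw_b_subset])
    fix x y :: zword assume "x \<in> Dw" "y \<in> Dw"
    then have "y - x \<in> Dw" using zsubgroup_diff[OF zsubgroup_Dw] by blast
    have "(y - x) + (y - x) = (y + y) - (x + x)" by (simp add: algebra_simps)
    then have "y + y = x + x \<longleftrightarrow> (y - x) + (y - x) = 0" by (simp only: right_minus_eq)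
    then show "y + y = x + x \<longleftrightarrow> y - x \<in> Dw_b" using \<open>y - x \<in> Dw\<close> by (simp add: Dw_b_def)
  qed
  have "(\<lambda>d. d + d) ` Dw \<subseteq> Dw_b"
  proof
    fix y assume "y \<in> (\<lambda>d. d + d) ` Dw"
    then obtain d where d: "d \<in> Dw" "y = d + d" by blast
    then have "y \<in> Dw" using zsubgroup_add[OF zsubgroup_Dw] by blast
    moreover have "y + y = 0" using d(2) zword_four_times[of d] by (simp add: add.assoc)
    ultimately show "y \<in> Dw_b" by (simp add: Dw_b_def)
  qed
  then have "card ((\<lambda>d. d + d) ` Dw) \<le> card Dw_b" using finite_Dw_b by (rule card_mono[rotated])
  then have "card ((\<lambda>d. d + d) ` Dw) * card Dw_b \<le> card Dw_b * card Dw_b" by (rule mult_le_mono1)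
  then have le: "2 ^ r * 2 ^ r \<le> card Dw_b * card Dw_b"
    using card_double card_Dw by (simp flip: power_mult_distrib)
  show ?thesis
  proof (rule ccontr)
    assume "\<not> 2 ^ r \<le> card Dw_b"
    then have "card Dw_b * card Dw_b < 2 ^ r * 2 ^ r" by (simp add: mult_strict_mono)
    then show False using le by simp
  qed
qed

lemma card_fst_Dw_le: "card (fst ` Dw) \<le> 2 ^ r"
proof -
  have "card (fst ` Dw) * 2 ^ r \<le> card (fst ` Dw) * card Dw_b" using card_Dw_b_ge by simp
  also have "\<dots> = 2 ^ r * 2 ^ r"
    using card_Dw_eq_card_fst_mult card_Dw by (simp flip: power_mult_distrib)
  finally show ?thesis by simp
qed

end


section \<open>The binary part of the dual code\<close>

context z24_perfect_code
begin

lemma exists_Dw_zinner_neq_0: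
  assumes "x \<in> zwords a b" "x \<notin> Cw"
  shows "\<exists>d\<in>Dw. zinner a b x d \<noteq> 0"
proof -
  have "x \<notin> zdual a b Dw" using assms(2) zdual_Dw by simp
  then obtain d where "d \<in> Dw" "zinner a b d x \<noteq> 0" using assms(1) by (auto simp: zdual_def)
  then show ?thesis using zinner_commute by metis
qed

lemma exists_Dw_fst_neq_0:
  assumes i: "i < a"
  shows "\<exists>d\<in>Dw. fst d i \<noteq> 0"
proof -
  have "unit_X i \<in> zball a b" "0 \<in> zball a b" using i by (auto simp: zball_def)
  then have "unit_X i \<notin> Cw" using zball_diff_in_Cw unit_X_neq_0 by fastforce
  then obtain d where "d \<in> Dw" "zinner a b (unit_X i) d \<noteq> 0"
    using exists_Dw_zinner_neq_0 unit_X_in_zwords[OF i] by blast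
  then show ?thesis using zinner_unit_X[OF i] by auto
qed

lemma exists_Dw_fst_neq:
  assumes i: "i < a" and j: "j < a" and "i \<noteq> j"
  shows "\<exists>d\<in>Dw. fst d i \<noteq> fst d j"
proof -
  have "unit_X i \<in> zball a b" "unit_X j \<in> zball a b" using i j by (auto simp: zball_def)
  moreover have "unit_X i \<noteq> unit_X j" using \<open>i \<noteq> j\<close> inj_unit_X by (auto dest: injD)
  moreover have "unit_X i - unit_X j = unit_X i + unit_X j"
    using unit_X_add_self[of j] by (simp add: eq_neg_iff_add_eq_0[symmetric])
  ultimately have "unit_X i + unit_X j \<notin> Cw" using zball_diff_in_Cw by metis
  then obtain d where "d \<in> Dw" "zinner a b (unit_X i + unit_X j) d \<noteq> 0"
    using exists_Dw_zinner_neq_0 unit_X_in_zwords i j by (meson zwords_add)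
  then have "d \<in> Dw" "z2_to_z4 (fst d i + fst d j) \<noteq> 0"
    by (simp_all add: zinner_add_left zinner_unit_X[OF i] zinner_unit_X[OF j] z2_to_z4_add)
  then show ?thesis by (metis z2_add_self z2_to_z4_eq_0_iff)
qed

lemma z2_subspace_fst_Dw: "z2_subspace (fst ` Dw)"
  unfolding z2_subspace_def
  using zsubgroup_0[OF zsubgroup_Dw] zsubgroup_add[OF zsubgroup_Dw] by (force simp: fst_add)

lemma fst_Dw_support: "v \<in> fst ` Dw \<Longrightarrow> a \<le> j \<Longrightarrow> v j = 0"
  using Dw_subset by (auto simp: zwords_def)

lemma proj_X_z24_dual: "proj_X (z24_dual a b C) = (\<lambda>v j. z2_to_nat (v j)) ` fst ` Dw"
proof -
  have "fst z = (\<lambda>j. z2_to_nat (fst (zword_of z) j))" if "z \<in> z24_dual a b C" for z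
  proof -
    have "z \<in> Z24 a b" using that by (simp add: z24_dual_def)
    then show ?thesis by (simp add: zword_of_def fun_eq_iff z2_to_nat_of_nat Z24_fst_less)
  qed
  then have "proj_X (z24_dual a b C) = (\<lambda>v j. z2_to_nat (v j)) ` fst ` zword_of ` z24_dual a b C"
    unfolding proj_X_def by (force simp: image_image)
  then show ?thesis by (simp add: zword_of_z24_dual Dw_def Cw_def)
qed

lemma fst_Dw_basis_columns:
  assumes basis: "lincomb m g ` binvecs m = fst ` Dw"
  shows "\<forall>j<a. \<exists>k<m. g k j \<noteq> 0"
    and "\<forall>i<a. \<forall>j<a. i \<noteq> j \<longrightarrow> (\<exists>k<m. g k i \<noteq> g k j)"
proof -
  have coords: "\<exists>c. fst d = lincomb m g c" if "d \<in> Dw" for d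
    using basis that by (metis imageE imageI)
  show "\<forall>j<a. \<exists>k<m. g k j \<noteq> 0"
  proof (intro allI impI, rule ccontr)
    fix j assume "j < a" "\<not> (\<exists>k<m. g k j \<noteq> 0)"
    moreover obtain d where "d \<in> Dw" "fst d j \<noteq> 0"
      using exists_Dw_fst_neq_0 calculation(1) by blast
    ultimately show False using coords lincomb_eq_0_at[of m g j] by fastforce
  qed
  show "\<forall>i<a. \<forall>j<a. i \<noteq> j \<longrightarrow> (\<exists>k<m. g k i \<noteq> g k j)"
  proof (intro allI impI, rule ccontr)
    fix i j assume "i < a" "j < a" "i \<noteq> j" "\<not> (\<exists>k<m. g k i \<noteq> g k j)"
    moreover obtain d where d: "d \<in> Dw" "fst d i \<noteq> fst d j"
      using exists_Dw_fst_neq calculation by blast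
    moreover obtain c where "fst d = lincomb m g c" using coords d(1) by blast
    ultimately show False by (simp add: lincomb_def)
  qed
qed

text \<open>The dimension \<open>m\<close> of \<open>D\<^sub>X\<close> satisfies \<open>2\<^sup>m \<le> 2\<^sup>r\<close> by the order-two count, and \<open>2\<^sup>r - 1 \<le> 2\<^sup>m - 1\<close>
  because a generator matrix has \<open>\<alpha>\<close> nonzero, pairwise distinct columns.\<close>

theorem simplex_code_proj_X: "simplex_code r a (proj_X (z24_dual a b C))"
proof -
  obtain m g where g: "\<forall>k<m. g k \<in> fst ` Dw" "inj_on (lincomb m g) (binvecs m)"
      "lincomb m g ` binvecs m = fst ` Dw"
    using exists_basis[OF finite_imageI[OF finite_Dw] z2_subspace_fst_Dw] by blast
  note nonzero = fst_Dw_basis_columns(1)[OF g(3)]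
    and distinct = fst_Dw_basis_columns(2)[OF g(3)]
  have "card (fst ` Dw) = 2 ^ m"
    using card_image[OF g(2)] g(3) finite_card_binvecs[of m] by simp
  then have "m \<le> r" using card_fst_Dw_le by simp
  have "2 ^ r - 1 \<le> (2::nat) ^ m - 1"
    using length_le_of_columns[OF nonzero distinct] a_eq by simp
  moreover have "1 \<le> (2::nat) ^ r" "1 \<le> (2::nat) ^ m" by simp_all
  ultimately have "(2::nat) ^ r \<le> 2 ^ m" by linarith
  then have "m = r" using \<open>m \<le> r\<close> by simp
  have support: "\<forall>k<m. \<forall>j\<ge>a. g k j = 0" using g(1) fst_Dw_support by blast
  have "simplex_code r a ((\<lambda>v j. z2_to_nat (v j)) ` lincomb r g ` binvecs r)"
    by (rule simplex_code_lincomb[OF a_eq]) (use support nonzero distinct \<open>m = r\<close> in simp_all)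
  then show ?thesis using g(3) \<open>m = r\<close> by (simp add: proj_X_z24_dual)
qed

lemma X_part_zero_iff_order2:
  assumes z: "z \<in> z24_dual a b C"
  shows "(\<forall>i<a. fst z i = 0) \<longleftrightarrow> z \<in> order2_part (z24_dual a b C)"
proof -
  have zZ: "z \<in> Z24 a b" using z by (simp add: z24_dual_def)
  have "zword_of z \<in> zword_of ` z24_dual a b C" using z by blast
  then have zD: "zword_of z \<in> Dw" by (simp add: zword_of_z24_dual Dw_def Cw_def)
  have "(\<forall>i<a. fst z i = 0) \<longleftrightarrow> (\<forall>i. fst z i = 0)"
    using Z24_fst_outside[OF zZ] not_less by blast
  also have "\<dots> \<longleftrightarrow> fst (zword_of z) = 0"
  proof -
    have "(of_nat (fst z i) :: 2) = 0 \<longleftrightarrow> fst z i = 0" for i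
      using of_nat_eq_iff_2[OF Z24_fst_less[OF zZ, of i], of 0] by simp
    then show ?thesis by (simp add: zword_of_def fun_eq_iff)
  qed
  also have "\<dots> \<longleftrightarrow> zword_of z + zword_of z = 0"
    using Dw_fst_eq_0_imp_double_eq_0[OF zD] Dw_double_eq_0_imp_fst_eq_0[OF zD] by blast
  also have "\<dots> \<longleftrightarrow> zword_of (z24_add z z) = zword_of z24_zero"
    by (simp add: zword_of_add zword_of_zero)
  also have "\<dots> \<longleftrightarrow> z24_add z z = z24_zero"
    using inj_on_zword_of[of a b] Z24_add[OF zZ zZ] Z24_zero by (auto dest: inj_onD)
  finally show ?thesis using z by (simp add: order2_part_def)
qed

end

lemma bin_cyclic_proj_X: "z24_cyclic a b D \<Longrightarrow> bin_cyclic a (proj_X D)"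
  unfolding z24_cyclic_def bin_cyclic_def proj_X_def by (force intro: rev_image_eqI)

theorem proposition3p4:
  fixes r \<alpha> \<beta> :: nat and C :: "z24vec set"
  assumes "r \<ge> 2"
    and "\<alpha> = 2 ^ r - 1"
    and "\<beta> = 2 ^ (r - 1) * (2 ^ r - 1)"
    and "z24_additive \<alpha> \<beta> C"
    and "z24_perfect1 \<alpha> \<beta> C"
    and "z24_cyclic \<alpha> \<beta> (z24_dual \<alpha> \<beta> C)"
  shows "simplex_code r \<alpha> (proj_X (z24_dual \<alpha> \<beta> C))
       \<and> bin_cyclic \<alpha> (proj_X (z24_dual \<alpha> \<beta> C))
       \<and> (\<forall>z\<in>z24_dual \<alpha> \<beta> C.
             (\<forall>i<\<alpha>. fst z i = 0) \<longleftrightarrow> z \<in> order2_part (z24_dual \<alpha> \<beta> C))"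
proof -
  interpret z24_perfect_code r \<alpha> \<beta> C
    using assms(1-5) by unfold_locales simp_all
  show ?thesis
    using simplex_code_proj_X bin_cyclic_proj_X[OF assms(6)] X_part_zero_iff_order2 by blast
qed

end
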